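(* For all polynomials $f,g\in F[t]$ and all $a,b\in F$, $$\int_a^b (f*_\psi\partial_\psi g)(t)\,d_\psi t=(f*_\psi g)(b)-(f*_\psi g)(a)-\int_a^b\bigl((Df)*_\psi g\bigr)(t)\,d_\psi t,$$ where $D$ is the ordinary derivative.
   Context: Let $F=\mathbb R$ or $\mathbb C$ and $\psi=(\psi_n)_{n\ge0}$ a sequence in $F$ with all $\psi_n\neq0$; put $n_\psi:=\psi_{n-1}/\psi_n$ ($n\ge1$). On $F[t]$ define linear operators $\partial_\psi1=0$, $\partial_\psi t^n=n_\psi t^{n-1}$ ($n\ge1$), $\hat t_\psi t^n=\frac{n+1}{(n+1)_\psi}t^{n+1}$ ($n\ge0$). For $f=\sum_j a_jt^j$ and $g\in F[t]$ set $f*_\psi g:=\sum_j a_j\hat t_\psi^{\,j}g$. The $\psi$-antiderivative is the linear operator $\int_\psi t^n=\frac{1}{(n+1)_\psi}t^{n+1}$, and $\int_a^b h(t)\,d_\psi t:=H(b)-H(a)$ with $H=\int_\psi h$. *)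

theory Defs
  imports "HOL-Computational_Algebra.Polynomial"
begin

definition npsi :: "(nat \<Rightarrow> 'a::field) \<Rightarrow> nat \<Rightarrow> 'a" where
  "npsi psi n = psi (n - 1) / psi n"

definition dpsi :: "(nat \<Rightarrow> 'a::field) \<Rightarrow> 'a poly \<Rightarrow> 'a poly" where
  "dpsi psi g = (\<Sum>n\<in>{1..degree g}. monom (coeff g n * npsi psi n) (n - 1))"

definition that :: "(nat \<Rightarrow> 'a::field) \<Rightarrow> 'a poly \<Rightarrow> 'a poly" where
  "that psi g = (\<Sum>n\<le>degree g. monom (coeff g n * (of_nat (n + 1) / npsi psi (n + 1))) (n + 1))"

definition pstar :: "(nat \<Rightarrow> 'a::field) \<Rightarrow> 'a poly \<Rightarrow> 'a poly \<Rightarrow> 'a poly" where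
  "pstar psi f g = (\<Sum>j\<le>degree f. smult (coeff f j) ((that psi ^^ j) g))"

definition ipsi :: "(nat \<Rightarrow> 'a::field) \<Rightarrow> 'a poly \<Rightarrow> 'a poly" where
  "ipsi psi h = (\<Sum>n\<le>degree h. monom (coeff h n / npsi psi (n + 1)) (n + 1))"

definition dint :: "(nat \<Rightarrow> 'a::field) \<Rightarrow> 'a \<Rightarrow> 'a \<Rightarrow> 'a poly \<Rightarrow> 'a" where
  "dint psi a b h = poly (ipsi psi h) b - poly (ipsi psi h) a"

end

theory Submission imports Defs begin

(* All operators of the psi-calculus act diagonally on monomials, so we first compute
   their coefficients explicitly; linearity then follows coefficientwise.  The key
   algebraic fact is the commutation relation  d_psi t_psi - t_psi d_psi = id  (for all
   psi_n nonzero), which iterates to  d_psi t_psi^j = t_psi^j d_psi + j t_psi^(j-1).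
   Summing over the coefficients of f gives the Leibniz rule
       d_psi (f *_psi g) = f *_psi (d_psi g) + f' *_psi g.
   Since the psi-antiderivative inverts d_psi up to the constant term, the definite
   psi-integral of a psi-derivative is the difference of the endpoint values
   (fundamental theorem).  Integrating the Leibniz rule from a to b then yields the
   theorem, which is proved for an arbitrary field and instantiated to R and C. *)

lemma npsi_nonzero:
  assumes "\<forall>n. psi n \<noteq> 0"
  shows "npsi psi n \<noteq> (0::'a::field)"
  using assms by (simp add: npsi_def)

lemma coeff_dpsi: "coeff (dpsi psi g) n = coeff g (Suc n) * npsi psi (Suc n)"
proof -
  have "coeff (dpsi psi g) n
      = (\<Sum>m\<in>{1..degree g}. if m = Suc n then coeff g m * npsi psi m else 0)"
    unfolding dpsi_def coeff_sum coeff_monom by (rule sum.cong) auto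
  also have "\<dots> = coeff g (Suc n) * npsi psi (Suc n)"
    by (auto simp: coeff_eq_0)
  finally show ?thesis .
qed

lemma coeff_that:
  "coeff (that psi g) n = (if n = 0 then 0 else coeff g (n - 1) * (of_nat n / npsi psi n))"
proof -
  have "coeff (that psi g) n
      = (\<Sum>m\<le>degree g. if m = n - 1 \<and> n \<noteq> 0
                         then coeff g m * (of_nat (m + 1) / npsi psi (m + 1)) else 0)"
    unfolding that_def coeff_sum coeff_monom by (rule sum.cong) auto
  also have "\<dots> = (if n = 0 then 0 else coeff g (n - 1) * (of_nat n / npsi psi n))"
    by (cases n) (auto simp: coeff_eq_0)
  finally show ?thesis .
qed

lemma coeff_ipsi: "coeff (ipsi psi g) n = (if n = 0 then 0 else coeff g (n - 1) / npsi psi n)"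
proof -
  have "coeff (ipsi psi g) n
      = (\<Sum>m\<le>degree g. if m = n - 1 \<and> n \<noteq> 0 then coeff g m / npsi psi (m + 1) else 0)"
    unfolding ipsi_def coeff_sum coeff_monom by (rule sum.cong) auto
  also have "\<dots> = (if n = 0 then 0 else coeff g (n - 1) / npsi psi n)"
    by (cases n) (auto simp: coeff_eq_0)
  finally show ?thesis .
qed

lemma dpsi_add: "dpsi psi (p + q) = dpsi psi p + dpsi psi q"
  by (simp add: poly_eq_iff coeff_dpsi algebra_simps)

lemma dpsi_smult: "dpsi psi (smult c p) = smult c (dpsi psi p)"
  by (simp add: poly_eq_iff coeff_dpsi)

lemma dpsi_sum: "dpsi psi (\<Sum>j\<in>A. h j) = (\<Sum>j\<in>A. dpsi psi (h j))"
proof (induction A rule: infinite_finite_induct)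
  case (infinite A)
  then show ?case by (simp add: poly_eq_iff coeff_dpsi)
next
  case empty
  then show ?case by (simp add: poly_eq_iff coeff_dpsi)
qed (simp add: dpsi_add)

lemma that_add: "that psi (p + q) = that psi p + that psi q"
  by (simp add: poly_eq_iff coeff_that algebra_simps)

lemma that_smult: "that psi (smult c p) = smult c (that psi p)"
  by (simp add: poly_eq_iff coeff_that)

lemma ipsi_diff: "ipsi psi (p - q) = ipsi psi p - ipsi psi q"
  by (simp add: poly_eq_iff coeff_ipsi diff_divide_distrib)

lemma dint_diff: "dint psi a b (p - q) = dint psi a b p - dint psi a b q"
  by (simp add: dint_def ipsi_diff)

lemma dpsi_that_commutator:
  assumes "\<forall>n. psi n \<noteq> 0"
  shows "dpsi psi (that psi g) = that psi (dpsi psi g) + (g :: 'a::field poly)"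
  using npsi_nonzero[OF assms] by (auto simp: poly_eq_iff coeff_dpsi coeff_that field_simps)

text \<open>Iterating the commutation relation; this is the psi-analogue of
  (t^j)' = j t^(j-1) acting as an operator.\<close>

lemma dpsi_that_power:
  assumes "\<forall>n. psi n \<noteq> 0"
  shows "dpsi psi ((that psi ^^ j) g)
       = (that psi ^^ j) (dpsi psi g) + smult (of_nat j) ((that psi ^^ (j - 1)) (g :: 'a::field poly))"
proof (induction j)
  case 0
  then show ?case by simp
next
  case (Suc j)
  have "dpsi psi ((that psi ^^ Suc j) g) = that psi (dpsi psi ((that psi ^^ j) g)) + (that psi ^^ j) g"
    using dpsi_that_commutator[OF assms] by simp
  also have "\<dots> = (that psi ^^ Suc j) (dpsi psi g) + smult (of_nat j) ((that psi ^^ j) g)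
                  + (that psi ^^ j) g"
    using Suc by (cases j) (auto simp: that_add that_smult)
  also have "\<dots> = (that psi ^^ Suc j) (dpsi psi g) + smult (of_nat (Suc j)) ((that psi ^^ (Suc j - 1)) g)"
    by (simp add: algebra_simps smult_add_left)
  finally show ?case .
qed

lemma pstar_sum_bound:
  assumes "degree f \<le> N"
  shows "pstar psi f g = (\<Sum>j\<le>N. smult (coeff f j) ((that psi ^^ j) g))"
proof -
  have "(\<Sum>j\<le>N. smult (coeff f j) ((that psi ^^ j) g))
      = (\<Sum>j\<le>degree f. smult (coeff f j) ((that psi ^^ j) g))"
    by (rule sum.mono_neutral_right) (use assms in \<open>auto simp: coeff_eq_0\<close>)
  then show ?thesis by (simp add: pstar_def)
qed

lemma dpsi_pstar:
  assumes "\<forall>n. psi n \<noteq> 0"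
  shows "dpsi psi (pstar psi f g) = pstar psi f (dpsi psi g) + pstar psi (pderiv f) (g :: 'a::field poly)"
proof -
  define N where "N = degree f"
  have deg_pderiv: "degree (pderiv f) \<le> N"
    unfolding N_def by (rule degree_le) (auto simp: coeff_pderiv coeff_eq_0)
  have top_coeff: "coeff f (Suc N) = 0"
    unfolding N_def by (simp add: coeff_eq_0)
  have "dpsi psi (pstar psi f g) = (\<Sum>j\<le>N. smult (coeff f j) (dpsi psi ((that psi ^^ j) g)))"
    by (simp add: pstar_def N_def dpsi_sum dpsi_smult)
  also have "\<dots> = pstar psi f (dpsi psi g)
      + (\<Sum>j\<le>N. smult (coeff f j * of_nat j) ((that psi ^^ (j - 1)) g))"
    by (simp add: pstar_def N_def dpsi_that_power[OF assms] smult_add_right sum.distrib)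
  also have "(\<Sum>j\<le>N. smult (coeff f j * of_nat j) ((that psi ^^ (j - 1)) g))
           = (\<Sum>j\<le>Suc N. smult (coeff f j * of_nat j) ((that psi ^^ (j - 1)) g))"
    using top_coeff by simp
  also have "\<dots> = (\<Sum>j\<le>N. smult (coeff f (Suc j) * of_nat (Suc j)) ((that psi ^^ j) g))"
    by (subst sum.atMost_Suc_shift) simp
  also have "\<dots> = pstar psi (pderiv f) g"
    by (subst pstar_sum_bound[OF deg_pderiv]) (simp add: coeff_pderiv mult.commute)
  finally show ?thesis .
qed

lemma ipsi_dpsi:
  assumes "\<forall>n. psi n \<noteq> 0"
  shows "ipsi psi (dpsi psi h) = h - [:coeff h 0 :: 'a::field:]"
proof (rule poly_eqI)
  fix n
  show "coeff (ipsi psi (dpsi psi h)) n = coeff (h - [:coeff h 0:]) n"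
    using npsi_nonzero[OF assms] by (cases n) (simp_all add: coeff_dpsi coeff_ipsi)
qed

lemma dint_dpsi:
  assumes "\<forall>n. psi n \<noteq> 0"
  shows "dint psi a b (dpsi psi h) = poly h b - poly h (a :: 'a::field)"
  by (simp add: dint_def ipsi_dpsi[OF assms])

lemma dint_pstar_by_parts:
  assumes "\<forall>n. psi n \<noteq> 0"
  shows "dint psi a b (pstar psi f (dpsi psi g))
       = poly (pstar psi f g) b - poly (pstar psi f g) a
         - dint psi a b (pstar psi (pderiv f) (g :: 'a::field poly))"
proof -
  have "pstar psi f (dpsi psi g) = dpsi psi (pstar psi f g) - pstar psi (pderiv f) g"
    using dpsi_pstar[OF assms] by simp
  then have "dint psi a b (pstar psi f (dpsi psi g))
      = dint psi a b (dpsi psi (pstar psi f g)) - dint psi a b (pstar psi (pderiv f) g)"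
    by (simp only: dint_diff)
  then show ?thesis
    by (simp only: dint_dpsi[OF assms])
qed

theorem mainTheorem7:
  shows "(\<forall>(psi :: nat \<Rightarrow> real) (f :: real poly) g a b. (\<forall>n. psi n \<noteq> 0) \<longrightarrow>
            dint psi a b (pstar psi f (dpsi psi g))
              = poly (pstar psi f g) b - poly (pstar psi f g) a
                - dint psi a b (pstar psi (pderiv f) g))
       \<and> (\<forall>(psi :: nat \<Rightarrow> complex) (f :: complex poly) g a b. (\<forall>n. psi n \<noteq> 0) \<longrightarrow>
            dint psi a b (pstar psi f (dpsi psi g))
              = poly (pstar psi f g) b - poly (pstar psi f g) a
                - dint psi a b (pstar psi (pderiv f) g))"
proof (intro conjI allI impI)
  fix psi :: "nat \<Rightarrow> real" and f g :: "real poly" and a b :: real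
  assume "\<forall>n. psi n \<noteq> 0"
  then show "dint psi a b (pstar psi f (dpsi psi g))
           = poly (pstar psi f g) b - poly (pstar psi f g) a - dint psi a b (pstar psi (pderiv f) g)"
    by (rule dint_pstar_by_parts)
next
  fix psi :: "nat \<Rightarrow> complex" and f g :: "complex poly" and a b :: complex
  assume "\<forall>n. psi n \<noteq> 0"
  then show "dint psi a b (pstar psi f (dpsi psi g))
           = poly (pstar psi f g) b - poly (pstar psi f g) a - dint psi a b (pstar psi (pderiv f) g)"
    by (rule dint_pstar_by_parts)
qed

end
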